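(* Let $f$ be an analytic function on $\mathbb{D}=\{z\in\mathbb{C}:|z|<1\}$ with $f(0)=0$, $f'(0)=1$ and $f(z)\neq 0$ for $0<|z|<1$, and suppose $f$ is not the identity function. Then the set $U_f=\{c\in\mathbb{C}: K_c[f]\text{ is univalent on }\mathbb{D}\}$ is a compact, polynomially convex subset of $\mathbb{C}$ and $0\in U_f$.
   Context: For such $f$, $f(z)/z$ extends to a non-vanishing analytic function on $\mathbb{D}$ with value $1$ at $0$; let $\operatorname{Log}(f(z)/z)$ denote the branch of $\log(f(z)/z)$ on $\mathbb{D}$ vanishing at $z=0$. For $c\in\mathbb{C}$ the power deformation is $K_c[f](z)=z\exp\big(c\operatorname{Log}(f(z)/z)\big)$. A compact set $E\subset\mathbb{C}$ is polynomially convex if and only if $\mathbb{C}\setminus E$ is connected. *)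

theory Defs
  imports "HOL-Complex_Analysis.Complex_Analysis" "HOL-Computational_Algebra.Polynomial"
begin

definition quot_fun :: "(complex \<Rightarrow> complex) \<Rightarrow> complex \<Rightarrow> complex" where
  "quot_fun f z = (if z = 0 then deriv f 0 else f z / z)"

definition LogQ :: "(complex \<Rightarrow> complex) \<Rightarrow> complex \<Rightarrow> complex" where
  "LogQ f = (SOME g. g holomorphic_on ball 0 1 \<and> g 0 = 0 \<and>
               (\<forall>z\<in>ball 0 1. exp (g z) = quot_fun f z))"

definition Kdef :: "complex \<Rightarrow> (complex \<Rightarrow> complex) \<Rightarrow> complex \<Rightarrow> complex" where
  "Kdef c f z = z * exp (c * LogQ f z)"

definition univalent_on_disc :: "(complex \<Rightarrow> complex) \<Rightarrow> bool" where
  "univalent_on_disc g \<longleftrightarrow> g holomorphic_on ball 0 1 \<and> inj_on g (ball 0 1)"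

definition U_set :: "(complex \<Rightarrow> complex) \<Rightarrow> complex set" where
  "U_set f = {c. univalent_on_disc (Kdef c f)}"

definition polynomially_convex :: "complex set \<Rightarrow> bool" where
  "polynomially_convex E \<longleftrightarrow>
     (\<forall>z. (\<forall>p :: complex poly. norm (poly p z) \<le> (SUP w\<in>E. norm (poly p w))) \<longrightarrow> z \<in> E)"

end

theory Submission
  imports Defs
begin

text \<open>Write \<open>g = Log(f(z)/z)\<close>, so that \<open>K\<^sub>c[f](z) = z exp(c g(z))\<close> and \<open>U\<^sub>f\<close> is the set of
  \<open>c\<close> for which this map is injective on the disc. \<open>U\<^sub>f\<close> is closed by Hurwitz's theorem, since
  \<open>K\<^sub>c[f]\<close> depends continuously on \<open>c\<close>, locally uniformly in \<open>z\<close>, and is never constant. It is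
  bounded: by the open mapping theorem \<open>z g'(z)\<close> attains \<open>-1/c\<close> for all large \<open>c\<close>, and there
  the derivative \<open>(1 + c z g'(z)) exp(c g(z))\<close> of \<open>K\<^sub>c[f]\<close> vanishes.

  For polynomial convexity, suppose \<open>K\<^sub>c\<^sub>0[f]\<close> identifies \<open>z\<^sub>1 \<noteq> z\<^sub>2\<close>. Then \<open>K\<^sub>c[f]\<close>
  identifies \<open>s z\<^sub>1\<close> and \<open>s z\<^sub>2\<close> whenever \<open>c (g(s z\<^sub>1) - g(s z\<^sub>2)) = c\<^sub>0 (g(z\<^sub>1) - g(z\<^sub>2))\<close>.
  As \<open>s\<close> ranges over the connected set where \<open>g(s z\<^sub>1) - g(s z\<^sub>2) \<noteq> 0\<close>, these \<open>c\<close> form a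
  connected set through \<open>c\<^sub>0\<close> that avoids \<open>U\<^sub>f\<close>, and it is unbounded because
  \<open>g(s z\<^sub>1) - g(s z\<^sub>2) \<rightarrow> 0\<close> as \<open>s \<rightarrow> 0\<close>. So every point outside \<open>U\<^sub>f\<close> can be joined to
  infinity in the complement, and Runge's pole-pushing argument yields a polynomial that is
  larger at that point than anywhere on \<open>U\<^sub>f\<close>.\<close>

section \<open>Polynomial approximation of Cauchy kernels\<close>

definition poly_approx :: "complex set \<Rightarrow> (complex \<Rightarrow> complex) \<Rightarrow> bool" where
  "poly_approx K F \<longleftrightarrow> (\<forall>e>0. \<exists>p. \<forall>z\<in>K. norm (F z - poly p z) < e)"

lemma poly_approx_poly_comp:
  assumes "poly_approx K u" and bound: "\<And>z. z \<in> K \<Longrightarrow> norm (u z) \<le> M"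
  shows "poly_approx K (\<lambda>z. poly P (u z))"
  unfolding poly_approx_def
proof (intro allI impI)
  fix e :: real assume "e > 0"
  have "uniformly_continuous_on (cball 0 (M + 1)) (poly P)"
    by (intro compact_uniformly_continuous continuous_intros) auto
  then obtain d where "d > 0" and d:
    "\<And>x y. x \<in> cball 0 (M + 1) \<Longrightarrow> y \<in> cball 0 (M + 1) \<Longrightarrow> dist y x < d \<Longrightarrow>
       dist (poly P y) (poly P x) < e"
    using \<open>e > 0\<close> unfolding uniformly_continuous_on_def by metis
  obtain p where p: "\<And>z. z \<in> K \<Longrightarrow> norm (u z - poly p z) < min d 1"
    using assms(1) \<open>d > 0\<close> unfolding poly_approx_def by (meson zero_less_one min_less_iff_conj)
  have "norm (poly P (u z) - poly (pcompose P p) z) < e" if "z \<in> K" for z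
  proof -
    have "norm (poly p z) \<le> norm (u z) + norm (u z - poly p z)"
      by (metis norm_minus_commute norm_triangle_sub)
    then have "poly p z \<in> cball 0 (M + 1)" and "u z \<in> cball 0 (M + 1)"
      using bound[OF that] p[OF that] by auto
    with d p[OF that] show ?thesis
      by (simp add: poly_pcompose dist_norm norm_minus_commute)
  qed
  then show "\<exists>q. \<forall>z\<in>K. norm (poly P (u z) - poly q z) < e" by blast
qed

lemma poly_approx_geometric:
  assumes q: "\<And>z. z \<in> K \<Longrightarrow> norm (q z) \<le> 1/2"
    and u: "\<And>z. z \<in> K \<Longrightarrow> norm (u z) \<le> M"
    and partial_sums: "\<And>N. poly_approx K (\<lambda>z. u z * (\<Sum>n<N. q z ^ n))"
  shows "poly_approx K (\<lambda>z. u z / (1 - q z))"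
  unfolding poly_approx_def
proof (intro allI impI)
  fix e :: real assume "e > 0"
  have "(\<lambda>N. 2 * \<bar>M\<bar> * (1/2::real) ^ N) \<longlonglongrightarrow> 0"
    by (intro tendsto_mult_right_zero LIMSEQ_power_zero) auto
  then obtain N where N: "2 * \<bar>M\<bar> * (1/2::real) ^ N < e/2"
    using \<open>e > 0\<close> by (metis half_gt_zero order_tendstoD(2) eventually_sequentially order.refl)
  obtain p where p: "\<And>z. z \<in> K \<Longrightarrow> norm (u z * (\<Sum>n<N. q z ^ n) - poly p z) < e/2"
    using partial_sums[of N] \<open>e > 0\<close> unfolding poly_approx_def by (meson half_gt_zero)
  have "norm (u z / (1 - q z) - poly p z) < e" if z: "z \<in> K" for z
  proof -
    have "1/2 \<le> norm (1 - q z)"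
      using norm_triangle_ineq2[of 1 "q z"] q[OF z] by simp
    then have "1 - q z \<noteq> 0" by auto
    moreover have "(\<Sum>n<N. q z ^ n) = (1 - q z ^ N) / (1 - q z)"
      using \<open>1 - q z \<noteq> 0\<close> by (simp add: sum_gp_strict)
    ultimately have "u z / (1 - q z) - u z * (\<Sum>n<N. q z ^ n) = u z * q z ^ N / (1 - q z)"
      by (simp add: diff_divide_distrib[symmetric] algebra_simps)
    also have "norm \<dots> \<le> \<bar>M\<bar> * (1/2) ^ N / (1/2)"
      unfolding norm_mult norm_divide norm_power
      using u[OF z] q[OF z] \<open>1/2 \<le> norm (1 - q z)\<close>
      by (intro frac_le mult_mono power_mono) auto
    finally have "norm (u z / (1 - q z) - u z * (\<Sum>n<N. q z ^ n)) < e/2"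
      using N by simp
    from norm_diff_triangle_less[OF this p[OF z]] show ?thesis by simp
  qed
  then show "\<exists>p. \<forall>z\<in>K. norm (u z / (1 - q z) - poly p z) < e" by blast
qed

lemma poly_approx_move_pole:
  assumes "d > 0" and far: "\<And>z. z \<in> K \<Longrightarrow> d \<le> norm (z - w)" and "norm (w' - w) \<le> d/2"
    and "poly_approx K (\<lambda>z. 1 / (z - w))"
  shows "poly_approx K (\<lambda>z. 1 / (z - w'))"
proof -
  define u where "u z = 1 / (z - w)" for z
  define q where "q z = (w' - w) * u z" for z
  have u: "norm (u z) \<le> 1/d" if "z \<in> K" for z
    using \<open>d > 0\<close> far[OF that] by (simp add: u_def norm_divide divide_simps)
  have q: "norm (q z) \<le> 1/2" if "z \<in> K" for z
  proof -
    have "norm (q z) \<le> (d/2) * (1/d)"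
      unfolding q_def norm_mult using u[OF that] assms(1,3) by (intro mult_mono) auto
    with \<open>d > 0\<close> show ?thesis by simp
  qed
  have "poly_approx K (\<lambda>z. u z / (1 - q z))"
  proof (rule poly_approx_geometric[OF q u])
    fix N
    define P where "P = (\<Sum>n<N. monom ((w' - w) ^ n) (Suc n))"
    have "poly P (u z) = u z * (\<Sum>n<N. q z ^ n)" for z
      by (simp add: P_def poly_sum poly_monom q_def sum_distrib_left power_mult_distrib mult_ac)
    with poly_approx_poly_comp[OF _ u, where P = P] assms(4)
    show "poly_approx K (\<lambda>z. u z * (\<Sum>n<N. q z ^ n))" by (simp add: u_def)
  qed
  moreover have "u z / (1 - q z) = 1 / (z - w')" if "z \<in> K" for z
  proof -
    have "z - w \<noteq> 0" using \<open>d > 0\<close> far[OF that] by auto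
    then show ?thesis by (simp add: u_def q_def field_simps)
  qed
  ultimately show ?thesis unfolding poly_approx_def by simp
qed

lemma poly_approx_far_pole:
  assumes K: "\<And>z. z \<in> K \<Longrightarrow> norm z \<le> R" and "R \<ge> 0" and w: "2 * R + 1 \<le> norm w"
  shows "poly_approx K (\<lambda>z. 1 / (z - w))"
proof -
  have "w \<noteq> 0" using w \<open>R \<ge> 0\<close> by auto
  define q where "q z = z / w" for z
  have q: "norm (q z) \<le> 1/2" if "z \<in> K" for z
    using w K[OF that] \<open>w \<noteq> 0\<close> by (simp add: q_def norm_divide divide_simps)
  have "poly_approx K (\<lambda>z. - 1 / w / (1 - q z))"
  proof (rule poly_approx_geometric[OF q])
    show "norm (- 1 / w) \<le> 1" using w \<open>R \<ge> 0\<close> by (simp add: norm_divide divide_simps)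
    fix N
    define P where "P = (\<Sum>n<N. monom (- 1 / w * (1 / w) ^ n) n)"
    have "poly P z = - 1 / w * (\<Sum>n<N. q z ^ n)" for z
      by (simp add: P_def poly_sum poly_monom q_def sum_distrib_left power_divide)
    then show "poly_approx K (\<lambda>z. - 1 / w * (\<Sum>n<N. q z ^ n))"
      unfolding poly_approx_def by (metis diff_self norm_zero)
  qed
  moreover have "- 1 / w / (1 - q z) = 1 / (z - w)" if "z \<in> K" for z
  proof -
    have "z \<noteq> w" using K[OF that] w \<open>R \<ge> 0\<close> by auto
    with \<open>w \<noteq> 0\<close> show ?thesis by (simp add: q_def field_simps)
  qed
  ultimately show ?thesis unfolding poly_approx_def by simp
qed

lemma poly_approx_pole_unbounded_connected:
  assumes "compact K" "connected S" "\<not> bounded S" "c \<in> S" "S \<inter> K = {}"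
  shows "poly_approx K (\<lambda>z. 1 / (z - c))"
proof -
  obtain R where R: "\<And>z. z \<in> K \<Longrightarrow> norm z \<le> R" "R \<ge> 0"
    using compact_imp_bounded[OF \<open>compact K\<close>] unfolding bounded_iff
    by (meson norm_ge_zero order_trans)
  obtain w where "w \<in> S" "2 * R + 1 \<le> norm w"
    using \<open>\<not> bounded S\<close> unfolding bounded_iff by (meson not_le less_imp_le)
  show ?thesis
  proof (rule connected_induction_simple[OF \<open>connected S\<close> \<open>w \<in> S\<close> \<open>c \<in> S\<close>])
    show "poly_approx K (\<lambda>z. 1 / (z - w))"
      using poly_approx_far_pole[OF R] \<open>2 * R + 1 \<le> norm w\<close> by blast
  next
    fix a assume "a \<in> S"
    then have "a \<in> - K" using \<open>S \<inter> K = {}\<close> by auto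
    moreover have "open (- K)" using \<open>compact K\<close> compact_imp_closed by blast
    ultimately obtain d where "d > 0" "ball a d \<subseteq> - K" using open_contains_ball by blast
    then have far: "d \<le> norm (z - a)" if "z \<in> K" for z
      using that by (force simp: dist_norm norm_minus_commute)
    show "\<exists>T. openin (top_of_set S) T \<and> a \<in> T \<and>
            (\<forall>x\<in>T. \<forall>y\<in>T. poly_approx K (\<lambda>z. 1 / (z - x)) \<longrightarrow> poly_approx K (\<lambda>z. 1 / (z - y)))"
    proof (intro exI conjI ballI impI)
      show "openin (top_of_set S) (S \<inter> ball a (d/3))" by (simp add: openin_open_Int)
      show "a \<in> S \<inter> ball a (d/3)" using \<open>a \<in> S\<close> \<open>d > 0\<close> by auto
      fix x y assume x: "x \<in> S \<inter> ball a (d/3)" and y: "y \<in> S \<inter> ball a (d/3)"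
        and approx_x: "poly_approx K (\<lambda>z. 1 / (z - x))"
      have "norm (a - x) < d/3" using x by (simp add: dist_norm)
      then have "2*d/3 \<le> norm (z - x)" if "z \<in> K" for z
        using far[OF that] norm_triangle_ineq[of "z - x" "x - a"] by (simp add: norm_minus_commute)
      with \<open>norm (a - x) < d/3\<close> have approx_a: "poly_approx K (\<lambda>z. 1 / (z - a))"
        by (intro poly_approx_move_pole[where d = "2*d/3", OF _ _ _ approx_x]) (use \<open>d > 0\<close> in auto)
      show "poly_approx K (\<lambda>z. 1 / (z - y))"
        by (rule poly_approx_move_pole[OF \<open>d > 0\<close> far _ approx_a])
          (use y \<open>d > 0\<close> in \<open>auto simp: dist_norm norm_minus_commute\<close>)
    qed
  qed
qed

text \<open>If \<open>1 / (z - c)\<close> is uniformly close to a polynomial \<open>p\<close> on \<open>K\<close>, then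
  \<open>1 - (z - c) p(z)\<close> is small on \<open>K\<close> but equals \<open>1\<close> at \<open>c\<close>.\<close>
lemma poly_peak_outside:
  assumes "compact K" "K \<noteq> {}" "c \<notin> K" "poly_approx K (\<lambda>z. 1 / (z - c))"
  obtains Q :: "complex poly" where "(SUP w\<in>K. norm (poly Q w)) < norm (poly Q c)"
proof -
  obtain R where R: "\<And>z. z \<in> K \<Longrightarrow> norm z \<le> R" "R \<ge> 0"
    using compact_imp_bounded[OF \<open>compact K\<close>] unfolding bounded_iff
    by (meson norm_ge_zero order_trans)
  define r where "r = R + norm c + 1"
  have "r > 0" using R(2) by (simp add: r_def add_nonneg_pos)
  then have "1 / (2 * r) > 0" by simp
  then obtain p where p: "\<And>z. z \<in> K \<Longrightarrow> norm (1 / (z - c) - poly p z) < 1 / (2 * r)"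
    using assms(4) unfolding poly_approx_def by blast
  define Q where "Q = 1 - [:- c, 1:] * p"
  have "norm (poly Q z) \<le> 1/2" if "z \<in> K" for z
  proof -
    have "z \<noteq> c" using that \<open>c \<notin> K\<close> by auto
    then have "poly Q z = (z - c) * (1 / (z - c) - poly p z)"
      by (simp add: Q_def field_simps)
    then have "norm (poly Q z) = norm (z - c) * norm (1 / (z - c) - poly p z)"
      by (simp add: norm_mult)
    also have "\<dots> \<le> r * (1 / (2 * r))"
      using R(1)[OF that] norm_triangle_ineq4[of z c] p[OF that]
      by (intro mult_mono) (use R(2) in \<open>auto simp: r_def\<close>)
    finally show ?thesis using \<open>r > 0\<close> by simp
  qed
  then have "(SUP w\<in>K. norm (poly Q w)) \<le> 1/2"
    using \<open>K \<noteq> {}\<close> by (intro cSUP_least) auto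
  moreover have "poly Q c = 1" by (simp add: Q_def)
  ultimately show ?thesis by (intro that[of Q]) simp
qed

lemma polynomially_convexI:
  assumes "compact K" "K \<noteq> {}"
    and escape: "\<And>c. c \<notin> K \<Longrightarrow> \<exists>S. connected S \<and> \<not> bounded S \<and> c \<in> S \<and> S \<inter> K = {}"
  shows "polynomially_convex K"
  unfolding polynomially_convex_def
proof (intro allI impI)
  fix c assume hull: "\<forall>p::complex poly. norm (poly p c) \<le> (SUP w\<in>K. norm (poly p w))"
  show "c \<in> K"
  proof (rule ccontr)
    assume "c \<notin> K"
    with escape obtain S where "connected S" "\<not> bounded S" "c \<in> S" "S \<inter> K = {}" by blast
    with \<open>compact K\<close> have "poly_approx K (\<lambda>z. 1 / (z - c))"
      by (rule poly_approx_pole_unbounded_connected)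
    then obtain Q where "(SUP w\<in>K. norm (poly Q w)) < norm (poly Q c)"
      using poly_peak_outside[OF assms(1,2) \<open>c \<notin> K\<close>] by blast
    with hull show False by (meson not_le)
  qed
qed

section \<open>Zero sets of holomorphic functions\<close>

lemma open_imp_fsigma:
  fixes S :: "'a::euclidean_space set"
  assumes "open S"
  shows "fsigma S"
proof (rule open_Union_compact_subsets[OF assms])
  fix C :: "nat \<Rightarrow> 'a set"
  assume "\<And>n. compact (C n)" and "\<Union> (range C) = S"
  then have "range C \<subseteq> Collect compact \<and> S = \<Union> (range C)" by auto
  then show ?thesis
    unfolding fsigma_Union_compact by (intro exI)
qed

lemma connected_nonzero_set:
  assumes "D holomorphic_on S" "open S" "connected S" "\<not> D constant_on S"
  shows "connected {s\<in>S. D s \<noteq> 0}"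
proof -
  have "countable {s\<in>S. D s = 0}"
    using holomorphic_countable_zeros[OF assms(1-3) open_imp_fsigma[OF assms(2)] assms(4)] .
  then have "connected (S - {s\<in>S. D s = 0})"
    by (intro connected_open_diff_countable assms) auto
  moreover have "S - {s\<in>S. D s = 0} = {s\<in>S. D s \<noteq> 0}" by blast
  ultimately show ?thesis by simp
qed

lemma
  assumes "D holomorphic_on S" "open S" "connected S" "\<not> D constant_on S"
    and "z \<in> S" "D z = 0" "a \<noteq> 0"
  shows connected_quotient_image: "connected ((\<lambda>s. a / D s) ` {s\<in>S. D s \<noteq> 0})"
    and not_bounded_quotient_image: "\<not> bounded ((\<lambda>s. a / D s) ` {s\<in>S. D s \<noteq> 0})"
proof -
  have "continuous_on {s\<in>S. D s \<noteq> 0} (\<lambda>s. a / D s)"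
    using holomorphic_on_imp_continuous_on[OF assms(1)]
    by (intro continuous_intros) (auto elim: continuous_on_subset)
  with connected_nonzero_set[OF assms(1-4)]
  show "connected ((\<lambda>s. a / D s) ` {s\<in>S. D s \<noteq> 0})"
    by (rule connected_continuous_image[rotated])
  show "\<not> bounded ((\<lambda>s. a / D s) ` {s\<in>S. D s \<noteq> 0})"
  proof
    assume "bounded ((\<lambda>s. a / D s) ` {s\<in>S. D s \<noteq> 0})"
    then obtain R where R: "\<And>s. s \<in> S \<Longrightarrow> D s \<noteq> 0 \<Longrightarrow> norm (a / D s) \<le> R"
      unfolding bounded_iff by blast
    obtain \<beta> where "\<beta> \<in> S" "D \<beta> \<noteq> 0"
      using \<open>D z = 0\<close> assms(4,5) unfolding constant_on_def by metis
    then have nonzero: "\<forall>\<^sub>F s in at z. D s \<noteq> 0 \<and> s \<in> S"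
      using non_zero_neighbour_alt[OF assms(1-3,5)] by blast
    have "(D \<longlongrightarrow> 0) (at z)"
      using assms(1,2,5,6) by (metis holomorphic_on_imp_continuous_on continuous_on_eq_continuous_at
          isCont_def)
    then have "filterlim (\<lambda>s. a / D s) at_infinity (at z)"
      using nonzero \<open>a \<noteq> 0\<close>
      by (intro filterlim_divide_at_infinity tendsto_const filterlim_atI) (auto elim: eventually_mono)
    then have "\<forall>\<^sub>F s in at z. \<bar>R\<bar> + 1 \<le> norm (a / D s)"
      by (simp add: filterlim_at_infinity[OF order_refl])
    with nonzero have "\<forall>\<^sub>F s in at z. (D s \<noteq> 0 \<and> s \<in> S) \<and> \<bar>R\<bar> + 1 \<le> norm (a / D s)"
      by (rule eventually_conj)
    then obtain s where "s \<in> S" "D s \<noteq> 0" "\<bar>R\<bar> + 1 \<le> norm (a / D s)"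
      using eventually_happens'[OF at_neq_bot] by blast
    with R show False by fastforce
  qed
qed

section \<open>Injectivity of the deformations \<open>z exp(c g(z))\<close>\<close>

definition univalence_set :: "(complex \<Rightarrow> complex) \<Rightarrow> complex set" where
  "univalence_set g = {c. inj_on (\<lambda>z. z * exp (c * g z)) (ball 0 1)}"

lemma deriv_deformation:
  assumes "g holomorphic_on S" "open S" "z \<in> S"
  shows "deriv (\<lambda>z. z * exp (c * g z)) z = exp (c * g z) * (1 + c * (z * deriv g z))"
proof -
  have "(g has_field_derivative deriv g z) (at z)"
    using assms by (intro holomorphic_derivI)
  then have "((\<lambda>z. z * exp (c * g z)) has_field_derivative
               exp (c * g z) + z * (exp (c * g z) * (c * deriv g z))) (at z)"
    by (auto intro!: derivative_eq_intros)
  then show ?thesis by (simp add: DERIV_imp_deriv algebra_simps)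
qed

lemma times_deriv_not_constant:
  assumes "g holomorphic_on S" "open S" "connected S" "0 \<in> S" "\<not> g constant_on S"
  shows "\<not> (\<lambda>z. z * deriv g z) constant_on S"
proof
  assume "(\<lambda>z. z * deriv g z) constant_on S"
  with \<open>0 \<in> S\<close> have "z * deriv g z = 0" if "z \<in> S" for z
    using that unfolding constant_on_def by force
  then have "\<forall>z\<in>S - {0}. (g has_field_derivative 0) (at z)"
    using assms(1,2) by (metis DiffE holomorphic_derivI insertI1 mult_eq_0_iff)
  then obtain k where "\<And>z. z \<in> S \<Longrightarrow> g z = k"
    using DERIV_zero_connected_constant[of S "{0}" g] assms(1-3) holomorphic_on_imp_continuous_on
    by auto
  with \<open>\<not> g constant_on S\<close> show False by (auto simp: constant_on_def)
qed

lemma bounded_univalence_set: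
  assumes hol: "g holomorphic_on ball 0 1" and "\<not> g constant_on ball 0 1"
  shows "bounded (univalence_set g)"
proof -
  define h where "h z = z * deriv g z" for z
  have "h holomorphic_on ball 0 1"
    unfolding h_def by (intro holomorphic_intros holomorphic_deriv hol) auto
  moreover have "\<not> h constant_on ball 0 1"
    unfolding h_def using assms by (intro times_deriv_not_constant) auto
  ultimately have "open (h ` ball 0 1)" by (intro open_mapping_thm) auto
  moreover have "0 \<in> h ` ball 0 1" by (force simp: h_def)
  ultimately obtain r where "r > 0" and r: "ball 0 r \<subseteq> h ` ball 0 1"
    using open_contains_ball by blast
  have "norm c \<le> 1/r" if "c \<in> univalence_set g" for c
  proof (rule ccontr)
    assume "\<not> norm c \<le> 1/r"
    with \<open>r > 0\<close> have "c \<noteq> 0" "norm (-1/c) < r"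
      by (auto simp: norm_divide divide_simps mult.commute)
    with r have "-1/c \<in> h ` ball 0 1" by auto
    then obtain z where z: "z \<in> ball 0 1" "h z = -1/c" by (metis imageE)
    have "(\<lambda>z. z * exp (c * g z)) holomorphic_on ball 0 1"
      by (intro holomorphic_intros hol)
    with \<open>c \<in> univalence_set g\<close> have "deriv (\<lambda>z. z * exp (c * g z)) z \<noteq> 0"
      by (intro holomorphic_injective_imp_regular[OF _ _ _ z(1)]) (auto simp: univalence_set_def)
    with z \<open>c \<noteq> 0\<close> show False
      using deriv_deformation[OF hol open_ball z(1)] by (simp add: h_def)
  qed
  then show ?thesis unfolding bounded_iff by blast
qed

lemma uniform_limit_deformation:
  fixes g :: "complex \<Rightarrow> complex"
  assumes "compact C" "continuous_on C g" "s \<longlonglongrightarrow> l"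
  shows "uniform_limit C (\<lambda>n z. z * exp (s n * g z)) (\<lambda>z. z * exp (l * g z)) sequentially"
proof -
  define B where "B = cball l 1 \<times> C"
  have "compact B" using \<open>compact C\<close> unfolding B_def by (intro compact_Times) auto
  have "continuous_on B (\<lambda>p. g (snd p))"
    by (rule continuous_on_compose2[OF assms(2) continuous_on_snd]) (auto simp: B_def)
  then have "continuous_on B (\<lambda>p. snd p * exp (fst p * g (snd p)))"
    by (intro continuous_intros)
  with \<open>compact B\<close> have uc: "uniformly_continuous_on B (\<lambda>p. snd p * exp (fst p * g (snd p)))"
    by (intro compact_uniformly_continuous)
  have lim: "uniform_limit C (\<lambda>n z. (s n, z)) (\<lambda>z. (l, z)) sequentially"
    using assms(3) by (intro uniform_limitI) (auto simp: dist_Pair_Pair elim: tendstoD)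
  have ev: "\<forall>\<^sub>F n in sequentially. \<forall>z\<in>C. (s n, z) \<in> B"
    using tendstoD[OF assms(3), of 1] by (auto simp: B_def dist_commute elim: eventually_mono)
  from uniform_limit_compose_uniformly_continuous_on[OF lim uc ev compact_imp_closed[OF \<open>compact B\<close>]]
  show ?thesis by simp
qed

lemma closed_univalence_set:
  assumes hol: "g holomorphic_on ball 0 1"
  shows "closed (univalence_set g)"
  unfolding closed_sequential_limits
proof (intro allI impI, elim conjE)
  fix s l assume s: "\<forall>n. s n \<in> univalence_set g" and "s \<longlonglongrightarrow> l"
  have "inj_on (\<lambda>z. z * exp (l * g z)) (ball 0 1)"
  proof (rule Hurwitz_injective[OF open_ball connected_ball])
    show "(\<lambda>z. z * exp (s n * g z)) holomorphic_on ball 0 1" for n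
      by (intro holomorphic_intros hol)
    show "(\<lambda>z. z * exp (l * g z)) holomorphic_on ball 0 1"
      by (intro holomorphic_intros hol)
    show "uniform_limit K (\<lambda>n z. z * exp (s n * g z)) (\<lambda>z. z * exp (l * g z)) sequentially"
      if "compact K" "K \<subseteq> ball 0 1" for K
      using that \<open>s \<longlonglongrightarrow> l\<close> hol
      by (intro uniform_limit_deformation) (auto intro: holomorphic_on_imp_continuous_on holomorphic_on_subset)
    show "\<not> (\<lambda>z. z * exp (l * g z)) constant_on ball 0 1"
    proof
      assume "(\<lambda>z. z * exp (l * g z)) constant_on ball 0 1"
      moreover have "1/2 \<in> ball (0::complex) 1" by simp
      ultimately have "0 * exp (l * g 0) = 1/2 * exp (l * g (1/2))"
        unfolding constant_on_def by (metis centre_in_ball zero_less_one)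
      then show False by simp
    qed
    show "inj_on (\<lambda>z. z * exp (s n * g z)) (ball 0 1)" for n
      using s by (simp add: univalence_set_def)
  qed
  then show "l \<in> univalence_set g" by (simp add: univalence_set_def)
qed

lemma rescaled_collision_not_in_univalence_set:
  fixes g :: "complex \<Rightarrow> complex"
  assumes collide: "z1 * exp (c0 * g z1) = z2 * exp (c0 * g z2)" and "z1 \<noteq> z2" "s \<noteq> 0"
    and "s * z1 \<in> ball 0 1" "s * z2 \<in> ball 0 1"
    and "c * (g (s * z1) - g (s * z2)) = c0 * (g z1 - g z2)"
  shows "c \<notin> univalence_set g"
proof -
  have "z1 * exp (c0 * (g z1 - g z2)) = z1 * exp (c0 * g z1) / exp (c0 * g z2)"
    by (simp add: right_diff_distrib exp_diff)
  also have "\<dots> = z2" using collide by simp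
  finally have "z1 * exp (c0 * (g z1 - g z2)) = z2" .
  moreover have "c * g (s * z1) = c0 * (g z1 - g z2) + c * g (s * z2)"
    using assms(6) by (simp add: algebra_simps)
  ultimately have "s * z1 * exp (c * g (s * z1)) = s * z2 * exp (c * g (s * z2))"
    by (simp add: exp_add mult_ac)
  moreover have "s * z1 \<noteq> s * z2" using \<open>s \<noteq> 0\<close> \<open>z1 \<noteq> z2\<close> by simp
  ultimately show ?thesis
    using assms(4,5) unfolding univalence_set_def inj_on_def by blast
qed

lemma univalence_set_escape:
  assumes hol: "g holomorphic_on ball 0 1" and "c0 \<notin> univalence_set g"
  shows "\<exists>S. connected S \<and> \<not> bounded S \<and> c0 \<in> S \<and> S \<inter> univalence_set g = {}"
proof -
  obtain z1 z2 where z: "z1 \<in> ball 0 1" "z2 \<in> ball 0 1" "z1 \<noteq> z2"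
    and collide: "z1 * exp (c0 * g z1) = z2 * exp (c0 * g z2)"
    using \<open>c0 \<notin> univalence_set g\<close> unfolding univalence_set_def inj_on_def by blast
  then have "z1 \<noteq> 0" "z2 \<noteq> 0" "g z1 \<noteq> g z2" by auto
  define R where "R = min (1 / norm z1) (1 / norm z2)"
  have "R > 1" using z \<open>z1 \<noteq> 0\<close> \<open>z2 \<noteq> 0\<close> by (simp add: R_def)
  have scaled: "s * z1 \<in> ball 0 1" "s * z2 \<in> ball 0 1" if "s \<in> ball 0 R" for s
    using that \<open>z1 \<noteq> 0\<close> \<open>z2 \<noteq> 0\<close> by (auto simp: R_def norm_mult field_simps)
  define D where "D s = g (s * z1) - g (s * z2)" for s
  have holD: "D holomorphic_on ball 0 R"
    unfolding D_def using scaled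
    by (intro holomorphic_intros holomorphic_on_compose_gen[unfolded o_def, OF _ hol]) auto
  have "1 \<in> ball (0::complex) R" using \<open>R > 1\<close> by simp
  have "D 0 = 0" "D 1 \<noteq> 0" using \<open>g z1 \<noteq> g z2\<close> by (auto simp: D_def)
  then have nonconst: "\<not> D constant_on ball 0 R"
    using \<open>1 \<in> ball 0 R\<close> \<open>R > 1\<close> unfolding constant_on_def by (metis centre_in_ball less_trans zero_less_one)
  have "c0 \<noteq> 0" using \<open>c0 \<notin> univalence_set g\<close> by (auto simp: univalence_set_def)
  define \<Lambda> where "\<Lambda> = c0 * D 1"
  have "\<Lambda> \<noteq> 0" using \<open>c0 \<noteq> 0\<close> \<open>D 1 \<noteq> 0\<close> by (simp add: \<Lambda>_def)
  define \<Sigma> where "\<Sigma> = {s \<in> ball 0 R. D s \<noteq> 0}"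
  have "0 \<in> ball (0::complex) R" using \<open>R > 1\<close> by simp
  note quotient_image = holD open_ball connected_ball nonconst this \<open>D 0 = 0\<close> \<open>\<Lambda> \<noteq> 0\<close>
  have "connected ((\<lambda>s. \<Lambda> / D s) ` \<Sigma>)" "\<not> bounded ((\<lambda>s. \<Lambda> / D s) ` \<Sigma>)"
    unfolding \<Sigma>_def
    using connected_quotient_image[OF quotient_image] not_bounded_quotient_image[OF quotient_image] .
  moreover have "c0 \<in> (\<lambda>s. \<Lambda> / D s) ` \<Sigma>"
    using \<open>1 \<in> ball 0 R\<close> \<open>D 1 \<noteq> 0\<close> by (force simp: \<Lambda>_def \<Sigma>_def)
  moreover have "\<Lambda> / D s \<notin> univalence_set g" if "s \<in> \<Sigma>" for s
  proof (rule rescaled_collision_not_in_univalence_set[OF collide \<open>z1 \<noteq> z2\<close>])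
    show "s \<noteq> 0" using that \<open>D 0 = 0\<close> by (auto simp: \<Sigma>_def)
    show "s * z1 \<in> ball 0 1" "s * z2 \<in> ball 0 1" using that scaled by (auto simp: \<Sigma>_def)
    show "\<Lambda> / D s * (g (s * z1) - g (s * z2)) = c0 * (g z1 - g z2)"
      using that by (simp add: \<Sigma>_def \<Lambda>_def D_def)
  qed
  ultimately show ?thesis by blast
qed

section \<open>The power deformation\<close>

lemma
  fixes f :: "complex \<Rightarrow> complex"
  assumes "f holomorphic_on ball 0 1" "f 0 = 0" "deriv f 0 = 1"
    and "\<forall>z. 0 < norm z \<and> norm z < 1 \<longrightarrow> f z \<noteq> 0"
  shows LogQ_holomorphic: "LogQ f holomorphic_on ball 0 1"
    and LogQ_0: "LogQ f 0 = 0"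
    and exp_LogQ: "\<And>z. z \<in> ball 0 1 \<Longrightarrow> exp (LogQ f z) = quot_fun f z"
proof -
  have "quot_fun f = (\<lambda>z. if z = 0 then deriv f 0 else (f z - f 0) / (z - 0))"
    using assms(2) by (auto simp: quot_fun_def)
  then have "quot_fun f holomorphic_on ball 0 1"
    using pole_lemma[OF assms(1)] by auto
  moreover have "quot_fun f z \<noteq> 0" if "z \<in> ball 0 1" for z
    using that assms(3,4) by (auto simp: quot_fun_def)
  ultimately obtain h where h: "h holomorphic_on ball 0 1" "\<And>z. z \<in> ball 0 1 \<Longrightarrow> exp (h z) = quot_fun f z"
    using holomorphic_logarithm_exists[OF convex_ball open_ball] by (metis centre_in_ball zero_less_one)
  have "quot_fun f 0 = 1" using assms(3) by (simp add: quot_fun_def)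
  with h have "\<exists>g. g holomorphic_on ball 0 1 \<and> g 0 = 0 \<and> (\<forall>z\<in>ball 0 1. exp (g z) = quot_fun f z)"
    by (intro exI[of _ "\<lambda>z. h z - h 0"]) (auto intro!: holomorphic_intros simp: exp_diff)
  then have "LogQ f holomorphic_on ball 0 1 \<and> LogQ f 0 = 0 \<and>
      (\<forall>z\<in>ball 0 1. exp (LogQ f z) = quot_fun f z)"
    unfolding LogQ_def by (rule someI_ex)
  then show "LogQ f holomorphic_on ball 0 1" "LogQ f 0 = 0"
    "\<And>z. z \<in> ball 0 1 \<Longrightarrow> exp (LogQ f z) = quot_fun f z" by auto
qed

lemma U_set_eq_univalence_set:
  assumes "LogQ f holomorphic_on ball 0 1"
  shows "U_set f = univalence_set (LogQ f)"
  using assms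
  by (auto simp: U_set_def univalence_set_def univalent_on_disc_def Kdef_def[abs_def]
      intro!: holomorphic_intros)

lemma LogQ_not_constant:
  fixes f :: "complex \<Rightarrow> complex"
  assumes "f holomorphic_on ball 0 1" "f 0 = 0" "deriv f 0 = 1"
    and "\<forall>z. 0 < norm z \<and> norm z < 1 \<longrightarrow> f z \<noteq> 0"
    and "\<exists>z\<in>ball 0 1. f z \<noteq> z"
  shows "\<not> LogQ f constant_on ball 0 1"
proof
  assume "LogQ f constant_on ball 0 1"
  then have "LogQ f z = 0" if "z \<in> ball 0 1" for z
    using that LogQ_0[OF assms(1-4)] unfolding constant_on_def by force
  moreover obtain z where "z \<in> ball 0 1" "f z \<noteq> z" using assms(5) by blast
  ultimately have "quot_fun f z = 1" using exp_LogQ[OF assms(1-4)] by force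
  with \<open>f z \<noteq> z\<close> \<open>f 0 = 0\<close> show False
    by (cases "z = 0") (auto simp: quot_fun_def)
qed

theorem theorem1p1:
  fixes f :: "complex \<Rightarrow> complex"
  assumes "f holomorphic_on ball 0 1"
    and "f 0 = 0"
    and "deriv f 0 = 1"
    and "\<forall>z. 0 < norm z \<and> norm z < 1 \<longrightarrow> f z \<noteq> 0"
    and "\<exists>z\<in>ball 0 1. f z \<noteq> z"
  shows "compact (U_set f) \<and> polynomially_convex (U_set f) \<and> 0 \<in> U_set f"
proof -
  have hol: "LogQ f holomorphic_on ball 0 1"
    using LogQ_holomorphic[OF assms(1-4)] .
  then have U: "U_set f = univalence_set (LogQ f)"
    by (rule U_set_eq_univalence_set)
  have "compact (univalence_set (LogQ f))"
    using bounded_univalence_set[OF hol LogQ_not_constant[OF assms]] closed_univalence_set[OF hol]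
    by (simp add: compact_eq_bounded_closed)
  moreover have "0 \<in> univalence_set (LogQ f)"
    by (simp add: univalence_set_def)
  moreover have "polynomially_convex (univalence_set (LogQ f))"
    using calculation univalence_set_escape[OF hol] by (intro polynomially_convexI) auto
  ultimately show ?thesis using U by simp
qed

end
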